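(* Let $d\ge1$, $I=[0,1]$, and for $v\in\{0,2\}^d$ let $h_v(\mathbf{x})=(\mathbf{x}+v)/3$; for a word $w=(v_1,\dots,v_n)\in(\{0,2\}^d)^n$ write $h_w=h_{v_1}\circ\cdots\circ h_{v_n}$. There exists a constant $C_d$ depending only on $d$ such that for every affine hyperplane $\mathcal{L}\subseteq\mathbb{R}^d$ and every $n\in\mathbb{N}$, with $\varepsilon=3^{-n}$, the open $\varepsilon$-neighborhood $\mathcal{L}^{(\varepsilon)}$ intersected with $\mathcal{C}^d$ can be covered by at most $C_d2^{(d-1)n}$ cubes of the form $h_w(I^d)$ with $w\in(\{0,2\}^d)^n$.
   Context: $\mathcal{C}$ is the middle-thirds Cantor set; $\mathcal{C}^d$ is the limit set of the maps $h_v$, $v\in\{0,2\}^d$. $\mathcal{L}^{(\varepsilon)}$ denotes the open Euclidean $\varepsilon$-neighborhood of $\mathcal{L}$. *)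

theory Defs
  imports "HOL-Analysis.Analysis"
begin

definition digits :: "(real ^ 'n) set" where
  "digits = {v. \<forall>i. v $ i \<in> {0, 2}}"

definition hmap :: "real ^ 'n \<Rightarrow> real ^ 'n \<Rightarrow> real ^ 'n" where
  "hmap v x = (1/3) *\<^sub>R (x + v)"

definition words :: "nat \<Rightarrow> (real ^ 'n) list set" where
  "words n = {w. length w = n \<and> set w \<subseteq> digits}"

definition hword :: "(real ^ 'n) list \<Rightarrow> real ^ 'n \<Rightarrow> real ^ 'n" where
  "hword w = foldr (\<lambda>v f. hmap v \<circ> f) w id"

definition unit_cube :: "(real ^ 'n) set" where
  "unit_cube = {x. \<forall>i. 0 \<le> x $ i \<and> x $ i \<le> 1}"

definition cantor_d :: "(real ^ 'n) set" where
  "cantor_d = (\<Inter>n. \<Union>w\<in>words n. hword w ` unit_cube)"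

definition affine_hyperplane :: "(real ^ 'n) set \<Rightarrow> bool" where
  "affine_hyperplane L \<longleftrightarrow> (\<exists>a b. a \<noteq> 0 \<and> L = {x. a \<bullet> x = b})"

definition open_nbhd :: "(real ^ 'n) set \<Rightarrow> real \<Rightarrow> (real ^ 'n) set" where
  "open_nbhd L e = {x. \<exists>y\<in>L. dist x y < e}"

end

theory Submission
  imports Defs
begin

(* Write L = {x. a \<bullet> x = b}, let \<epsilon> = 3^-n and pick a coordinate i with |a_i| maximal.
   Group the level-n cubes h_w(I^d) meeting L^(\<epsilon>) by their words with the i-th digit
   coordinate erased: there are at most 2^((d-1)n) groups.  The corners h_w(0) of a group agree
   off coordinate i, and a \<bullet> x varies by at most d |a_i| \<epsilon> both across a cube and across the
   slab L^(\<epsilon>); hence their i-th coordinates lie within 3 d \<epsilon> of each other.  Corners lie in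
   \<epsilon> \<int>^d and determine the word, so each group has at most 3d + 1 cubes, and C_d = 3d + 1. *)

lemma card_le_card_image_mult:
  assumes "finite A" "\<And>y. card {x \<in> A. f x = y} \<le> k"
  shows "card A \<le> card (f ` A) * k"
proof -
  have "A = (\<Union>y\<in>f ` A. {x \<in> A. f x = y})" by auto
  then have "card A \<le> (\<Sum>y\<in>f ` A. card {x \<in> A. f x = y})"
    by (metis card_UN_le assms(1) finite_imageI)
  also have "\<dots> \<le> card (f ` A) * k"
    using sum_bounded_above[of "f ` A" "\<lambda>y. card {x \<in> A. f x = y}" k] assms(2) by simp
  finally show ?thesis .
qed

lemma card_Ints_le_diameter:
  fixes S :: "real set"
  assumes ints: "S \<subseteq> \<int>" and diam: "\<And>s t. s \<in> S \<Longrightarrow> t \<in> S \<Longrightarrow> \<bar>s - t\<bar> \<le> real r"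
  shows "card S \<le> r + 1"
proof (cases "S = {}")
  case False
  have floor_eq: "of_int \<lfloor>s\<rfloor> = s" if "s \<in> S" for s
    using ints that by (auto elim!: Ints_cases)
  have window: "S \<subseteq> of_int ` {\<lfloor>m\<rfloor> - int r..\<lfloor>m\<rfloor> + int r}" if "m \<in> S" for m
  proof
    fix s assume "s \<in> S"
    with that have "real_of_int \<bar>\<lfloor>s\<rfloor> - \<lfloor>m\<rfloor>\<bar> \<le> real_of_int (int r)"
      using diam floor_eq by (metis of_int_abs of_int_diff of_int_of_nat_eq)
    then have "\<bar>\<lfloor>s\<rfloor> - \<lfloor>m\<rfloor>\<bar> \<le> int r"
      by (simp only: of_int_le_iff)
    then show "s \<in> of_int ` {\<lfloor>m\<rfloor> - int r..\<lfloor>m\<rfloor> + int r}"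
      using floor_eq[OF \<open>s \<in> S\<close>, symmetric] by (intro image_eqI[of s _ "\<lfloor>s\<rfloor>"]) auto
  qed
  obtain s0 where "s0 \<in> S" using False by blast
  then have "finite S"
    using window finite_subset finite_imageI finite_atLeastAtMost_int by metis
  define m where "m = Min S"
  have "m \<in> S" "\<And>s. s \<in> S \<Longrightarrow> m \<le> s"
    using \<open>finite S\<close> False by (simp_all add: m_def)
  have "S \<subseteq> of_int ` {\<lfloor>m\<rfloor>..\<lfloor>m\<rfloor> + int r}"
  proof
    fix s assume "s \<in> S"
    then have "\<lfloor>m\<rfloor> \<le> \<lfloor>s\<rfloor>" using \<open>\<And>s. s \<in> S \<Longrightarrow> m \<le> s\<close> floor_mono by blast
    moreover have "\<lfloor>s\<rfloor> \<le> \<lfloor>m\<rfloor> + int r" using window[OF \<open>m \<in> S\<close>] \<open>s \<in> S\<close> by auto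
    ultimately show "s \<in> of_int ` {\<lfloor>m\<rfloor>..\<lfloor>m\<rfloor> + int r}"
      using floor_eq[OF \<open>s \<in> S\<close>, symmetric] by (intro image_eqI[of s _ "\<lfloor>s\<rfloor>"]) auto
  qed
  then have "card S \<le> card (of_int ` {\<lfloor>m\<rfloor>..\<lfloor>m\<rfloor> + int r} :: real set)"
    by (intro card_mono) simp_all
  also have "\<dots> \<le> card {\<lfloor>m\<rfloor>..\<lfloor>m\<rfloor> + int r}"
    by (rule card_image_le) simp
  finally show ?thesis by simp
qed simp

lemma obtain_max_abs_component:
  fixes a :: "real ^ 'n"
  assumes "a \<noteq> 0"
  obtains i where "\<And>j. \<bar>a $ j\<bar> \<le> \<bar>a $ i\<bar>" "a $ i \<noteq> 0"
proof -
  have "Max (range (\<lambda>j. \<bar>a $ j\<bar>)) \<in> range (\<lambda>j. \<bar>a $ j\<bar>)"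
    by (rule Max_in) auto
  then obtain i where i: "Max (range (\<lambda>j. \<bar>a $ j\<bar>)) = \<bar>a $ i\<bar>"
    by blast
  have max: "\<bar>a $ j\<bar> \<le> \<bar>a $ i\<bar>" for j
    unfolding i[symmetric] by (rule Max_ge) auto
  moreover have "a $ i \<noteq> 0"
  proof
    assume "a $ i = 0"
    then have "a $ j = 0" for j
      using max[of j] by simp
    with \<open>a \<noteq> 0\<close> show False
      by (simp add: vec_eq_iff)
  qed
  ultimately show ?thesis
    using that by blast
qed

lemma abs_inner_le_card_mult:
  fixes a z :: "real ^ 'n" and M r :: real
  assumes "\<And>j. \<bar>a $ j\<bar> \<le> M" "\<And>j. \<bar>z $ j\<bar> \<le> r"
  shows "\<bar>a \<bullet> z\<bar> \<le> CARD('n) * M * r"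
proof -
  have "\<bar>a \<bullet> z\<bar> \<le> (\<Sum>j\<in>UNIV. \<bar>a $ j\<bar> * \<bar>z $ j\<bar>)"
    using sum_abs[of "\<lambda>j. a $ j * z $ j" UNIV] by (simp add: inner_vec_def abs_mult)
  also have "\<dots> \<le> (\<Sum>j::'n\<in>UNIV. M * r)"
    by (intro sum_mono mult_mono) (auto intro: assms order_trans[OF abs_ge_zero assms(1)])
  finally show ?thesis by simp
qed

lemma finite_digits: "finite (digits :: (real ^ 'n) set)"
proof -
  have "(digits :: (real ^ 'n) set) \<subseteq> vec_lambda ` (UNIV \<rightarrow>\<^sub>E {0, 2})"
  proof
    fix v :: "real ^ 'n"
    assume "v \<in> digits"
    then have "vec_nth v \<in> UNIV \<rightarrow>\<^sub>E {0, 2}"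
      by (auto simp: digits_def PiE_iff)
    then show "v \<in> vec_lambda ` (UNIV \<rightarrow>\<^sub>E {0, 2})"
      by (metis image_eqI vec_nth_inverse)
  qed
  moreover have "finite (vec_lambda ` (UNIV \<rightarrow>\<^sub>E {0::real, 2}) :: (real ^ 'n) set)"
    by (intro finite_imageI finite_PiE) auto
  ultimately show ?thesis
    by (rule finite_subset)
qed

lemma finite_words: "finite (words n :: (real ^ 'n) list set)"
  using finite_lists_length_eq[OF finite_digits, of n] unfolding words_def by (simp add: conj_commute)

lemma hword_Nil [simp]: "hword [] = id"
  by (simp add: hword_def)

lemma hword_Cons [simp]: "hword (v # w) = hmap v \<circ> hword w"
  by (simp add: hword_def)

lemma hword_eq_scale_plus_corner: "hword w x = (1/3) ^ length w *\<^sub>R x + hword w 0"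
  by (induction w) (simp_all add: hmap_def algebra_simps)

lemma hword_zero_nth_cong:
  "map (\<lambda>v. v $ j) w = map (\<lambda>v. v $ j) w' \<Longrightarrow> hword w 0 $ j = hword w' 0 $ j"
proof (induction w arbitrary: w')
  case (Cons v w)
  then obtain v' u where w': "w' = v' # u" "v $ j = v' $ j" "map (\<lambda>v. v $ j) w = map (\<lambda>v. v $ j) u"
    by (cases w') auto
  with Cons.IH have "hword w 0 $ j = hword u 0 $ j" by blast
  with w' show ?case by (simp add: hmap_def)
qed simp

lemma hword_zero_nth_bounds:
  "set w \<subseteq> digits \<Longrightarrow> 0 \<le> hword w 0 $ j \<and> hword w 0 $ j < 1"
proof (induction w)
  case (Cons v w)
  then have "v $ j \<in> {0, 2}" by (simp add: digits_def)
  with Cons show ?case by (auto simp: hmap_def)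
qed simp

lemma hword_zero_inj:
  assumes "set w \<subseteq> digits" "set w' \<subseteq> digits" "length w = length w'"
    and "hword w 0 = hword w' 0"
  shows "w = w'"
  using assms
proof (induction w arbitrary: w')
  case (Cons v w)
  then obtain v' u' where w': "w' = v' # u'" by (cases w') auto
  have corner: "hword w 0 + v = hword u' 0 + v'"
    using Cons.prems(4) by (simp add: w' hmap_def)
  have "v $ j = v' $ j" for j
  proof -
    have "v $ j \<in> {0, 2}" "v' $ j \<in> {0, 2}"
      using Cons.prems(1,2) by (auto simp: w' digits_def)
    moreover have "\<bar>hword w 0 $ j - hword u' 0 $ j\<bar> < 1"
      using hword_zero_nth_bounds[of w j] hword_zero_nth_bounds[of u' j] Cons.prems(1,2)
      by (auto simp: w')
    moreover have "hword w 0 $ j + v $ j = hword u' 0 $ j + v' $ j"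
      using corner by (metis vector_add_component)
    ultimately show ?thesis by auto
  qed
  then have "v = v'" by (simp add: vec_eq_iff)
  with corner Cons show ?case by (auto simp: w')
qed simp

lemma hword_zero_scaled_Ints:
  "set w \<subseteq> digits \<Longrightarrow> 3 ^ length w * hword w 0 $ j \<in> \<int>"
proof (induction w)
  case (Cons v w)
  then have "v $ j \<in> {0, 2}" by (simp add: digits_def)
  then have "v $ j \<in> \<int>" by auto
  then have "3 ^ length w * hword w 0 $ j + 3 ^ length w * v $ j \<in> \<int>"
    using Cons by auto
  then show ?case by (simp add: hmap_def algebra_simps)
qed simp

lemma abs_inner_diff_le_near_hyperplane:
  fixes a x :: "real ^ 'n" and M e :: real
  assumes "x \<in> open_nbhd {y. a \<bullet> y = b} e" "\<And>j. \<bar>a $ j\<bar> \<le> M"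
  shows "\<bar>a \<bullet> x - b\<bar> \<le> CARD('n) * M * e"
proof -
  obtain y where y: "a \<bullet> y = b" "dist x y < e"
    using assms(1) by (auto simp: open_nbhd_def)
  have "\<bar>(x - y) $ j\<bar> \<le> e" for j
    using component_le_norm_cart[of "x - y" j] y(2) by (simp add: dist_norm)
  then have "\<bar>a \<bullet> (x - y)\<bar> \<le> CARD('n) * M * e"
    using abs_inner_le_card_mult assms(2) by blast
  then show ?thesis by (simp add: y(1) inner_diff_right)
qed

lemma cube_corner_gap_le:
  fixes a c c' u u' :: "real ^ 'n" and e :: real
  assumes max: "\<And>j. \<bar>a $ j\<bar> \<le> \<bar>a $ i\<bar>" and "a $ i \<noteq> 0"
    and same: "\<And>j. j \<noteq> i \<Longrightarrow> c $ j = c' $ j"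
    and "u \<in> unit_cube" "u' \<in> unit_cube"
    and near: "e *\<^sub>R u + c \<in> open_nbhd {y. a \<bullet> y = b} e" "e *\<^sub>R u' + c' \<in> open_nbhd {y. a \<bullet> y = b} e"
  shows "\<bar>c $ i - c' $ i\<bar> \<le> 3 * real CARD('n) * e"
proof -
  define K where "K = CARD('n) * \<bar>a $ i\<bar>"
  have "e > 0"
    using near(1) by (auto simp: open_nbhd_def intro: le_less_trans[OF zero_le_dist])
  have "c - c' = (c $ i - c' $ i) *\<^sub>R axis i 1"
    using same by (auto simp: vec_eq_iff axis_def)
  then have corner: "a \<bullet> (c - c') = a $ i * (c $ i - c' $ i)"
    by (simp add: inner_axis)
  have "\<bar>(u - u') $ j\<bar> \<le> 1" for j
  proof -
    have "0 \<le> u $ j \<and> u $ j \<le> 1" "0 \<le> u' $ j \<and> u' $ j \<le> 1"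
      using \<open>u \<in> unit_cube\<close> \<open>u' \<in> unit_cube\<close> by (auto simp: unit_cube_def)
    then show ?thesis by (auto simp: abs_le_iff)
  qed
  then have "\<bar>a \<bullet> (u - u')\<bar> \<le> K"
    using abs_inner_le_card_mult[OF max, of "u - u'" 1] by (simp add: K_def)
  then have "\<bar>e * (a \<bullet> (u - u'))\<bar> \<le> e * K"
    using \<open>e > 0\<close> by (simp add: abs_mult)
  moreover have "\<bar>a \<bullet> (e *\<^sub>R u + c) - b\<bar> \<le> e * K" "\<bar>a \<bullet> (e *\<^sub>R u' + c') - b\<bar> \<le> e * K"
    using abs_inner_diff_le_near_hyperplane[OF near(1) max]
      abs_inner_diff_le_near_hyperplane[OF near(2) max] by (simp_all add: K_def algebra_simps)
  moreover have "a $ i * (c $ i - c' $ i)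
      = (a \<bullet> (e *\<^sub>R u + c) - b) - (a \<bullet> (e *\<^sub>R u' + c') - b) - e * (a \<bullet> (u - u'))"
    using corner by (simp add: inner_add_right inner_diff_right algebra_simps)
  ultimately have "\<bar>a $ i * (c $ i - c' $ i)\<bar> \<le> 3 * (e * K)"
    by linarith
  then have "\<bar>a $ i\<bar> * \<bar>c $ i - c' $ i\<bar> \<le> \<bar>a $ i\<bar> * (3 * real CARD('n) * e)"
    by (simp add: K_def abs_mult mult_ac)
  then show ?thesis
    using \<open>a $ i \<noteq> 0\<close> by simp
qed

definition meeting_words :: "(real ^ 'n) set \<Rightarrow> nat \<Rightarrow> (real ^ 'n) list set" where
  "meeting_words L n = {w \<in> words n. hword w ` unit_cube \<inter> open_nbhd L ((1/3) ^ n) \<noteq> {}}"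

lemma open_nbhd_inter_cantor_subset_meeting_words:
  "open_nbhd L ((1/3) ^ n) \<inter> cantor_d \<subseteq> (\<Union>w\<in>meeting_words L n. hword w ` unit_cube)"
proof
  fix x
  assume x: "x \<in> open_nbhd L ((1/3) ^ n) \<inter> cantor_d"
  then obtain w where "w \<in> words n" "x \<in> hword w ` unit_cube"
    unfolding cantor_d_def by blast
  with x show "x \<in> (\<Union>w\<in>meeting_words L n. hword w ` unit_cube)"
    by (auto simp: meeting_words_def)
qed

(* Restricting to - {i} (rather than zeroing coordinate i) makes the erased digit vectors range
   over a set of the form PiE, whose cardinality is 2^(d-1). *)
definition erase_coord :: "'n \<Rightarrow> (real ^ 'n) list \<Rightarrow> ('n \<Rightarrow> real) list" where
  "erase_coord i w = map (\<lambda>v. restrict (vec_nth v) (- {i})) w"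

lemma erase_coord_eq_imp_corner_eq:
  assumes "erase_coord i w = erase_coord i w'" "j \<noteq> i"
  shows "hword w 0 $ j = hword w' 0 $ j"
proof (rule hword_zero_nth_cong)
  from assms(1) have "map (\<lambda>f. f j) (erase_coord i w) = map (\<lambda>f. f j) (erase_coord i w')"
    by simp
  with assms(2) show "map (\<lambda>v. v $ j) w = map (\<lambda>v. v $ j) w'"
    by (simp add: erase_coord_def o_def)
qed

lemma card_erase_coord_words:
  fixes i :: "'n::finite"
  shows "card (erase_coord i ` words n) \<le> 2 ^ ((CARD('n) - 1) * n)"
proof -
  define B where "B = (- {i}) \<rightarrow>\<^sub>E {0::real, 2}"
  have "finite B"
    by (simp add: B_def finite_PiE)
  have "card B = 2 ^ (CARD('n) - 1)"
    by (simp add: B_def card_PiE Compl_eq_Diff_UNIV card_Diff_singleton numeral_2_eq_2)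
  have "restrict (vec_nth v) (- {i}) \<in> B" if "v \<in> digits" for v
    using that by (auto simp: B_def digits_def)
  then have "erase_coord i ` words n \<subseteq> {xs. set xs \<subseteq> B \<and> length xs = n}"
    by (auto simp: erase_coord_def words_def subset_iff)
  then have "card (erase_coord i ` words n) \<le> card {xs. set xs \<subseteq> B \<and> length xs = n}"
    by (intro card_mono finite_lists_length_eq \<open>finite B\<close>)
  also have "\<dots> = 2 ^ ((CARD('n) - 1) * n)"
    by (simp add: card_lists_length_eq \<open>finite B\<close> \<open>card B = _\<close> power_mult)
  finally show ?thesis .
qed

lemma meeting_words_corner_gap_le:
  fixes a :: "real ^ 'n"
  assumes max: "\<And>j. \<bar>a $ j\<bar> \<le> \<bar>a $ i\<bar>" and "a $ i \<noteq> 0"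
    and w: "w \<in> meeting_words {y. a \<bullet> y = b} n" and w': "w' \<in> meeting_words {y. a \<bullet> y = b} n"
    and erase: "erase_coord i w = erase_coord i w'"
  shows "\<bar>hword w 0 $ i - hword w' 0 $ i\<bar> \<le> 3 * real CARD('n) * (1/3) ^ n"
proof -
  have meets: "\<exists>u \<in> unit_cube. hword v u \<in> open_nbhd {y. a \<bullet> y = b} ((1/3) ^ n)"
    if "v \<in> meeting_words {y. a \<bullet> y = b} n" for v
    using that by (auto simp: meeting_words_def)
  obtain u u' where "u \<in> unit_cube" "u' \<in> unit_cube"
    and near: "hword w u \<in> open_nbhd {y. a \<bullet> y = b} ((1/3) ^ n)"
      "hword w' u' \<in> open_nbhd {y. a \<bullet> y = b} ((1/3) ^ n)"
    using meets[OF w] meets[OF w'] by blast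
  have "length w = n" "length w' = n"
    using w w' by (auto simp: meeting_words_def words_def)
  with near show ?thesis
    by (intro cube_corner_gap_le[OF max \<open>a $ i \<noteq> 0\<close> erase_coord_eq_imp_corner_eq[OF erase]
          \<open>u \<in> unit_cube\<close> \<open>u' \<in> unit_cube\<close>])
      (simp_all add: hword_eq_scale_plus_corner[of w u] hword_eq_scale_plus_corner[of w' u'])
qed

lemma card_meeting_words_fibre:
  fixes a :: "real ^ 'n"
  assumes max: "\<And>j. \<bar>a $ j\<bar> \<le> \<bar>a $ i\<bar>" and "a $ i \<noteq> 0"
  shows "card {w \<in> meeting_words {y. a \<bullet> y = b} n. erase_coord i w = p} \<le> 3 * CARD('n) + 1"
proof -
  define F where "F = {w \<in> meeting_words {y. a \<bullet> y = b} n. erase_coord i w = p}"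
  define g where "g w = 3 ^ n * hword w 0 $ i" for w :: "(real ^ 'n) list"
  have digit_word: "set w \<subseteq> digits" "length w = n" if "w \<in> F" for w
    using that by (auto simp: F_def meeting_words_def words_def)
  have "inj_on g F"
  proof (rule inj_onI)
    fix w w'
    assume "w \<in> F" "w' \<in> F" "g w = g w'"
    then have "hword w 0 $ j = hword w' 0 $ j" for j
      using erase_coord_eq_imp_corner_eq[of i w w' j] by (cases "j = i") (simp_all add: F_def g_def)
    then have "hword w 0 = hword w' 0"
      by (simp add: vec_eq_iff)
    then show "w = w'"
      using hword_zero_inj digit_word \<open>w \<in> F\<close> \<open>w' \<in> F\<close> by metis
  qed
  have "g w \<in> \<int>" if "w \<in> F" for w
    using hword_zero_scaled_Ints[OF digit_word(1)[OF that]] digit_word(2)[OF that] by (simp add: g_def)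
  then have "g ` F \<subseteq> \<int>"
    by auto
  have "\<bar>g w - g w'\<bar> \<le> real (3 * CARD('n))" if "w \<in> F" "w' \<in> F" for w w'
  proof -
    have "\<bar>hword w 0 $ i - hword w' 0 $ i\<bar> \<le> 3 * real CARD('n) * (1/3) ^ n"
      using that by (intro meeting_words_corner_gap_le[where b = b, OF max \<open>a $ i \<noteq> 0\<close>]) (simp_all add: F_def)
    then have "3 ^ n * \<bar>hword w 0 $ i - hword w' 0 $ i\<bar> \<le> 3 ^ n * (3 * real CARD('n) * (1/3) ^ n)"
      by (rule mult_left_mono) simp
    then show ?thesis
      by (simp add: g_def abs_mult right_diff_distrib[symmetric] power_one_over)
  qed
  then have "card (g ` F) \<le> 3 * CARD('n) + 1"
    by (intro card_Ints_le_diameter[OF \<open>g ` F \<subseteq> \<int>\<close>]) auto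
  then show ?thesis
    using card_image[OF \<open>inj_on g F\<close>] by (simp add: F_def)
qed

lemma card_meeting_words_le:
  fixes L :: "(real ^ 'n) set"
  assumes "affine_hyperplane L"
  shows "card (meeting_words L n) \<le> (3 * CARD('n) + 1) * 2 ^ ((CARD('n) - 1) * n)"
proof -
  obtain a b where "a \<noteq> 0" and L: "L = {y. a \<bullet> y = b}"
    using assms by (auto simp: affine_hyperplane_def)
  obtain i where max: "\<And>j. \<bar>a $ j\<bar> \<le> \<bar>a $ i\<bar>" and "a $ i \<noteq> 0"
    using obtain_max_abs_component[OF \<open>a \<noteq> 0\<close>] by blast
  have "finite (meeting_words L n)"
    by (rule finite_subset[OF _ finite_words]) (auto simp: meeting_words_def)
  then have "card (meeting_words L n) \<le> card (erase_coord i ` meeting_words L n) * (3 * CARD('n) + 1)"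
    using card_meeting_words_fibre[OF max \<open>a $ i \<noteq> 0\<close>] L by (intro card_le_card_image_mult) auto
  also have "\<dots> \<le> card (erase_coord i ` words n) * (3 * CARD('n) + 1)"
    by (intro mult_right_mono card_mono finite_imageI finite_words image_mono)
      (auto simp: meeting_words_def)
  also have "\<dots> \<le> 2 ^ ((CARD('n) - 1) * n) * (3 * CARD('n) + 1)"
    using card_erase_coord_words by (rule mult_right_mono) simp
  finally show ?thesis
    by (simp only: mult.commute)
qed

theorem mainTheorem6:
  shows "\<exists>C::real. \<forall>(L::(real ^ 'n) set) (n::nat). affine_hyperplane L \<longrightarrow>
     (\<exists>W. W \<subseteq> words n \<and> finite W \<and>
        real (card W) \<le> C * 2 ^ ((CARD('n) - 1) * n) \<and>
        open_nbhd L ((1/3) ^ n) \<inter> cantor_d \<subseteq> (\<Union>w\<in>W. hword w ` unit_cube))"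
proof (intro exI[of _ "real (3 * CARD('n) + 1)"] allI impI)
  fix L :: "(real ^ 'n) set" and n :: nat
  assume "affine_hyperplane L"
  have "meeting_words L n \<subseteq> words n"
    by (auto simp: meeting_words_def)
  moreover from this have "finite (meeting_words L n)"
    using finite_words by (rule finite_subset)
  moreover have "real (card (meeting_words L n)) \<le> real (3 * CARD('n) + 1) * 2 ^ ((CARD('n) - 1) * n)"
    using of_nat_mono[where 'a = real, OF card_meeting_words_le[OF \<open>affine_hyperplane L\<close>, of n]]
    by (simp add: algebra_simps)
  ultimately show "\<exists>W. W \<subseteq> words n \<and> finite W \<and>
        real (card W) \<le> real (3 * CARD('n) + 1) * 2 ^ ((CARD('n) - 1) * n) \<and>
        open_nbhd L ((1/3) ^ n) \<inter> cantor_d \<subseteq> (\<Union>w\<in>W. hword w ` unit_cube)"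
    using open_nbhd_inter_cantor_subset_meeting_words by blast
qed

end
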